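(* Let $n\in\mathbb{N}$ with $n\geq 2$, and let $x,y$ be two distinct symbols not in $\{1,\dots,n\}$. Regard $S_n$ as the subgroup of $S_{n+2}=\mathrm{Sym}(\{1,\dots,n,x,y\})$ consisting of the permutations fixing $x$ and $y$. Then for every $\sigma\in S_n$, the permutation $\sigma^{-1}$ (as an element of $S_{n+2}$) can be written as a product of pairwise distinct transpositions, each of which lies in $S_{n+2}\setminus S_n$ (that is, each transposition moves at least one of $x$, $y$).
   Context: Permutations are composed as functions. $S_{n+2}\setminus S_n$ denotes the set of permutations of $\{1,\dots,n,x,y\}$ that do not fix both $x$ and $y$. *)

theory Defs
  imports "HOL-Combinatorics.Permutations"
begin

end

theory Submission
  imports Defs
begin

text \<open>
  Call x and y the hubs. Every permutation \<rho> of S \<union> {x, y} is a product of distinct star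
  transpositions (z a), z a hub and a \<in> S, followed by either id or (x y); when \<rho> sends a hub
  into S, both choices of the trailing factor are possible.
  If \<rho> a is a hub for some a \<in> S, split off (\<rho> a, a) on the left; the trailing factor can be
  switched using (z a) = (z' a)(z a)(x y), where z' is the other hub, since conjugation by (x y)
  merely exchanges the hubs of the remaining star transpositions. Otherwise \<rho> preserves S;
  if it moves some a \<in> S, the permutation (\<rho> y, a) \<rho> (y a) fixes a and sends y into S, so the
  stronger hypothesis lets us pick the trailing factor that turns (y a), when moved past it, into
  the transposition of a with the hub other than \<rho> y. For \<rho> = \<sigma>\<inverse>, which fixes the hubs,
  the trailing (x y) is one more distinct factor.
\<close>

definition twist :: "'a \<Rightarrow> 'a \<Rightarrow> bool \<Rightarrow> 'a \<Rightarrow> 'a" where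
  "twist x y e = (if e then transpose x y else id)"

text \<open>The list L only contains pairs (hub, a) with a \<in> S, on which transpositions are injective.\<close>

definition star_decomp :: "'a \<Rightarrow> 'a \<Rightarrow> 'a set \<Rightarrow> bool \<Rightarrow> ('a \<Rightarrow> 'a) \<Rightarrow> bool" where
  "star_decomp x y S e \<rho> \<longleftrightarrow>
     (\<exists>L. set L \<subseteq> {x, y} \<times> S \<and> distinct L \<and> \<rho> = apply_transps L \<circ> twist x y e)"

lemma transpose_comp_apply_transps:
  "transpose x y \<circ> apply_transps L =
     apply_transps (map (map_prod (transpose x y) (transpose x y)) L) \<circ> transpose x y"
proof (induction L)
  case (Cons p L)
  let ?\<tau> = "transpose x y"
  have conj: "?\<tau> \<circ> transpose a b = transpose (?\<tau> a) (?\<tau> b) \<circ> ?\<tau>" for a b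
    by (metis transpose_comp_eq[OF bij_transpose] inv_transpose_eq transpose_involutory)
  have "?\<tau> \<circ> apply_transps (p # L) = (?\<tau> \<circ> transpose (fst p) (snd p)) \<circ> apply_transps L"
    by (simp add: comp_assoc)
  also have "\<dots> = transpose (?\<tau> (fst p)) (?\<tau> (snd p)) \<circ> (?\<tau> \<circ> apply_transps L)"
    by (simp only: conj comp_assoc)
  also have "\<dots> = apply_transps (map (map_prod ?\<tau> ?\<tau>) (p # L)) \<circ> ?\<tau>"
    by (simp only: Cons.IH list.map apply_transps_Cons fst_map_prod snd_map_prod comp_assoc)
  finally show ?case .
qed simp

lemma map_prod_transpose_star:
  assumes "x \<notin> S" "y \<notin> S" "set L \<subseteq> {x, y} \<times> S" "distinct L"
  shows "set (map (map_prod (transpose x y) (transpose x y)) L) \<subseteq> {x, y} \<times> S"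
    and "distinct (map (map_prod (transpose x y) (transpose x y)) L)"
proof -
  have "transpose x y a = a" if "a \<in> S" for a
    using that assms(1,2) by (auto simp: transpose_def)
  then show "set (map (map_prod (transpose x y) (transpose x y)) L) \<subseteq> {x, y} \<times> S"
    using assms(3) by auto
  have "inj (map_prod (transpose x y) (transpose x y))"
    by (simp add: prod.inj_map inj_transpose)
  then show "distinct (map (map_prod (transpose x y) (transpose x y)) L)"
    using assms(4) by (simp add: distinct_map inj_on_subset[OF _ subset_UNIV])
qed

lemma star_decomp_transpose_comp:
  assumes xy: "x \<noteq> y" "x \<notin> S" "y \<notin> S" and a: "a \<in> S" and z: "z \<in> {x, y}"
    and dec: "star_decomp x y (S - {a}) e' (transpose z a \<circ> \<rho>)"
  shows "star_decomp x y S e \<rho>"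
proof -
  obtain L where L: "set L \<subseteq> {x, y} \<times> (S - {a})" "distinct L"
    and L_eq: "transpose z a \<circ> \<rho> = apply_transps L \<circ> twist x y e'"
    using dec by (auto simp: star_decomp_def)
  have "\<rho> = (transpose z a \<circ> transpose z a) \<circ> \<rho>"
    by simp
  also have "\<dots> = transpose z a \<circ> apply_transps L \<circ> twist x y e'"
    by (simp only: comp_assoc L_eq)
  finally have \<rho>: "\<rho> = transpose z a \<circ> apply_transps L \<circ> twist x y e'" .
  have za: "(z, a) \<notin> set L"
    using L(1) by auto
  show ?thesis
  proof (cases "e = e'")
    case True
    then show ?thesis
      using L a z za \<rho> unfolding star_decomp_def by (intro exI[of _ "(z, a) # L"]) auto
  next
    case False
    let ?z' = "transpose x y z" and ?L' = "map (map_prod (transpose x y) (transpose x y)) L"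
    have z': "?z' \<in> {x, y}" "?z' \<noteq> z"
      using z xy(1) by auto
    have swap_hub: "transpose z a = transpose ?z' a \<circ> transpose z a \<circ> transpose x y"
      using z xy a by (auto simp: fun_eq_iff transpose_def)
    have "\<rho> = (transpose ?z' a \<circ> transpose z a \<circ> transpose x y) \<circ> apply_transps L \<circ> twist x y e'"
      by (subst \<rho>) (subst swap_hub, rule refl)
    also have "\<dots> = transpose ?z' a \<circ> transpose z a \<circ> apply_transps ?L' \<circ> (transpose x y \<circ> twist x y e')"
      by (simp add: comp_assoc transpose_comp_apply_transps[of x y L])
    also have "transpose x y \<circ> twist x y e' = twist x y e"
      using False by (auto simp: twist_def)
    finally have "\<rho> = apply_transps ((?z', a) # (z, a) # ?L') \<circ> twist x y e"
      by (simp only: apply_transps_Cons fst_conv snd_conv comp_assoc)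
    moreover have L': "set ?L' \<subseteq> {x, y} \<times> (S - {a})" "distinct ?L'"
      using map_prod_transpose_star[OF _ _ L] xy by auto
    moreover have "(?z', a) \<notin> set ?L'" "(z, a) \<notin> set ?L'"
      using L'(1) by auto
    ultimately show ?thesis
      using a z z' unfolding star_decomp_def
      by (intro exI[of _ "(?z', a) # (z, a) # ?L'"]) auto
  qed
qed

lemma star_decomp_conjugate:
  assumes xy: "x \<noteq> y" "x \<notin> S" "y \<notin> S" and a: "a \<in> S" and u: "u \<in> {x, y}"
    and dec: "\<And>e. star_decomp x y (S - {a}) e (transpose u a \<circ> \<rho> \<circ> transpose y a)"
  shows "\<exists>e. star_decomp x y S e \<rho>"
proof -
  define e where "e = (u = y)"
  let ?u' = "transpose x y u"
  obtain L where L: "set L \<subseteq> {x, y} \<times> (S - {a})" "distinct L"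
    and L_eq: "transpose u a \<circ> \<rho> \<circ> transpose y a = apply_transps L \<circ> twist x y e"
    using dec by (auto simp: star_decomp_def)
  have "\<rho> = transpose u a \<circ> (transpose u a \<circ> \<rho> \<circ> transpose y a) \<circ> transpose y a"
    by (simp add: fun_eq_iff)
  also have "\<dots> = transpose u a \<circ> apply_transps L \<circ> (twist x y e \<circ> transpose y a)"
    unfolding L_eq by (simp only: comp_assoc)
  also have "twist x y e \<circ> transpose y a = transpose ?u' a \<circ> twist x y e"
    using xy a u by (auto simp: fun_eq_iff twist_def e_def transpose_def)
  finally have "\<rho> = apply_transps ((u, a) # L @ [(?u', a)]) \<circ> twist x y e"
    by (simp only: apply_transps_Cons apply_transps_append apply_transps_Nil
        fst_conv snd_conv comp_assoc comp_id)
  moreover have "?u' \<in> {x, y}" "?u' \<noteq> u"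
    using u xy(1) by auto
  moreover have "(u, a) \<notin> set L" "(?u', a) \<notin> set L"
    using L(1) by auto
  ultimately show ?thesis
    using L u a unfolding star_decomp_def
    by (intro exI[of _ e] exI[of _ "(u, a) # L @ [(?u', a)]"]) auto
qed

lemma permutes_fixing_all_but_two:
  assumes "\<rho> permutes S \<union> {x, y}" "\<forall>a\<in>S. \<rho> a = a"
  shows "\<exists>e. \<rho> = twist x y e"
proof -
  have "\<rho> permutes {x, y}"
    using assms by (intro permutes_superset[OF assms(1)]) auto
  then show ?thesis
    by (auto simp: permutes_doubleton_iff twist_def)
qed

lemma inj_invariant_finite_preimage:
  assumes "finite S" "inj f" "f ` S \<subseteq> S" "f t \<in> S"
  shows "t \<in> S"
proof -
  have "f ` S = S"
    using assms by (intro endo_inj_surj) (auto intro: inj_on_subset)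
  then obtain s where "s \<in> S" "f s = f t"
    using assms(4) by (metis imageE)
  then show ?thesis
    using assms(2) by (metis injD)
qed

lemma permutes_conj_transpose_hub:
  assumes perm: "\<rho> permutes S \<union> {x, y}" and closed: "\<rho> ` S \<subseteq> S"
    and a: "a \<in> S" "\<rho> a \<noteq> a" and "y \<notin> S" "\<rho> y \<notin> S"
  shows "transpose (\<rho> y) a \<circ> \<rho> \<circ> transpose y a permutes (S - {a}) \<union> {x, y}"
    and "(transpose (\<rho> y) a \<circ> \<rho> \<circ> transpose y a) y \<in> S - {a}"
proof -
  have "\<rho> y \<in> {x, y}"
    using assms(6) permutes_in_image[OF perm, of y] by auto
  then have "transpose (\<rho> y) a \<circ> \<rho> \<circ> transpose y a permutes S \<union> {x, y}"
    using a(1) by (intro permutes_compose permutes_swap_id perm) auto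
  moreover have "(transpose (\<rho> y) a \<circ> \<rho> \<circ> transpose y a) a = a"
    using assms(5) a by simp
  ultimately show "transpose (\<rho> y) a \<circ> \<rho> \<circ> transpose y a permutes (S - {a}) \<union> {x, y}"
    by (elim permutes_superset) auto
  have "(transpose (\<rho> y) a \<circ> \<rho> \<circ> transpose y a) y = \<rho> a"
    using a closed assms(6) by (auto simp: transpose_def)
  then show "(transpose (\<rho> y) a \<circ> \<rho> \<circ> transpose y a) y \<in> S - {a}"
    using a closed by auto
qed

lemma permutes_star_decomp:
  assumes "finite S" "x \<noteq> y" "x \<notin> S" "y \<notin> S" "\<rho> permutes S \<union> {x, y}"
  shows "(\<exists>e. star_decomp x y S e \<rho>) \<and> (\<rho> x \<in> S \<or> \<rho> y \<in> S \<longrightarrow> (\<forall>e. star_decomp x y S e \<rho>))"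
  using assms(1,3-5)
proof (induction S arbitrary: \<rho> rule: finite_psubset_induct)
  case (psubset S)
  note perm = \<open>\<rho> permutes S \<union> {x, y}\<close>
  show ?case
  proof (cases "\<exists>a\<in>S. \<rho> a \<in> {x, y}")
    case True
    then obtain a where a: "a \<in> S" "\<rho> a \<in> {x, y}"
      by blast
    have "transpose (\<rho> a) a \<circ> \<rho> permutes (S \<union> {x, y})"
      using a by (intro permutes_compose[OF perm] permutes_swap_id) auto
    then have "transpose (\<rho> a) a \<circ> \<rho> permutes (S - {a}) \<union> {x, y}"
      by (rule permutes_superset) auto
    then obtain e' where "star_decomp x y (S - {a}) e' (transpose (\<rho> a) a \<circ> \<rho>)"
      using psubset.IH[of "S - {a}"] psubset.prems a(1) by blast
    then have "\<forall>e. star_decomp x y S e \<rho>"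
      using star_decomp_transpose_comp[OF assms(2) psubset.prems(1,2) a] by blast
    then show ?thesis
      by blast
  next
    case False
    have "\<rho> a \<in> S \<union> {x, y}" if "a \<in> S" for a
      using that permutes_in_image[OF perm] by simp
    with False have closed: "\<rho> ` S \<subseteq> S"
      by blast
    have hubs: "\<rho> x \<notin> S" "\<rho> y \<notin> S"
      using inj_invariant_finite_preimage[OF psubset.hyps permutes_inj[OF perm] closed]
        psubset.prems(1,2) by blast+
    have "\<exists>e. star_decomp x y S e \<rho>"
    proof (cases "\<forall>a\<in>S. \<rho> a = a")
      case True
      then obtain e where "\<rho> = twist x y e"
        using permutes_fixing_all_but_two[OF perm] by blast
      then show ?thesis
        unfolding star_decomp_def by (intro exI[of _ e] exI[of _ "[]"]) simp
    next
      case False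
      then obtain a where a: "a \<in> S" "\<rho> a \<noteq> a"
        by blast
      define \<rho>' where "\<rho>' = transpose (\<rho> y) a \<circ> \<rho> \<circ> transpose y a"
      have "\<rho>' permutes (S - {a}) \<union> {x, y}" "\<rho>' y \<in> S - {a}"
        using permutes_conj_transpose_hub[OF perm closed a psubset.prems(2) hubs(2)]
        unfolding \<rho>'_def by blast+
      then have "\<forall>e. star_decomp x y (S - {a}) e \<rho>'"
        using psubset.IH[of "S - {a}" \<rho>'] psubset.prems(1,2) a(1) by blast
      moreover have "\<rho> y \<in> {x, y}"
        using hubs(2) permutes_in_image[OF perm, of y] by auto
      ultimately show ?thesis
        using star_decomp_conjugate[OF assms(2) psubset.prems(1,2) a(1)] unfolding \<rho>'_def by blast
    qed
    with hubs show ?thesis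
      by blast
  qed
qed

lemma inj_on_transpose_star:
  assumes "x \<noteq> y" "x \<notin> S" "y \<notin> S"
  shows "inj_on (\<lambda>(a, b). transpose a b) (insert (x, y) ({x, y} \<times> S))"
proof (rule inj_onI, clarify)
  fix a b a' b'
  assume ab: "(a, b) \<in> insert (x, y) ({x, y} \<times> S)" "(a', b') \<in> insert (x, y) ({x, y} \<times> S)"
    and eq: "transpose a b = transpose a' b'"
  have support: "{e. transpose c d e \<noteq> e} = {c, d}" if "c \<noteq> d" for c d :: 'a
    using that by (auto simp: transpose_def)
  have "a \<noteq> b" "a' \<noteq> b'"
    using ab assms by auto
  then have "{a, b} = {a', b'}"
    using support[of a b] support[of a' b'] eq by simp
  then show "a = a' \<and> b = b'"
    using ab assms by (auto simp: doubleton_eq_iff)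
qed

theorem theorem1p1:
  fixes n x y :: nat and \<sigma> :: "nat \<Rightarrow> nat"
  assumes "n \<ge> 2"
    and "x \<notin> {1..n}" and "y \<notin> {1..n}" and "x \<noteq> y"
    and "\<sigma> permutes {1..n}"
  shows "\<exists>ts :: (nat \<times> nat) list.
           (\<forall>(a, b) \<in> set ts. a \<noteq> b \<and> a \<in> {1..n} \<union> {x, y} \<and> b \<in> {1..n} \<union> {x, y}
                               \<and> (a \<in> {x, y} \<or> b \<in> {x, y}))
         \<and> distinct (map (\<lambda>(a, b). transpose a b) ts)
         \<and> inv \<sigma> = foldr (\<circ>) (map (\<lambda>(a, b). transpose a b) ts) id"
proof -
  have "inv \<sigma> permutes {1..n} \<union> {x, y}"
    using permutes_inv[OF assms(5)] by (rule permutes_subset) auto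
  then obtain e L where L: "set L \<subseteq> {x, y} \<times> {1..n}" "distinct L"
    and \<sigma>: "inv \<sigma> = apply_transps L \<circ> twist x y e"
    using permutes_star_decomp[of "{1..n}" x y] assms(2-4) unfolding star_decomp_def by blast
  define ts where "ts = L @ (if e then [(x, y)] else [])"
  have "set ts \<subseteq> insert (x, y) ({x, y} \<times> {1..n})" "distinct ts"
    using L assms(3) by (auto simp: ts_def)
  then have "distinct (map (\<lambda>(a, b). transpose a b) ts)"
    unfolding distinct_map using inj_on_subset[OF inj_on_transpose_star[OF assms(4,2,3)]] by blast
  moreover have "inv \<sigma> = apply_transps ts"
    using \<sigma> by (simp add: ts_def twist_def)
  ultimately show ?thesis
    using L assms(2-4) unfolding apply_transps_def
    by (intro exI[of _ ts]) (auto simp: ts_def)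
qed

end
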